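(* Let $P$ be a finite geometric lattice of rank $n$ with atom ordering $a_1<\dots<a_m$ and its associated minimal labeling, and let $S=\{s_1<\dots<s_k\}\subseteq\{1,\dots,n-1\}$. Consider any shelling of the order complex of $P^S$ obtained as a linear extension of the order on maximal chains $\gamma$ of $P^S$ given by comparing, lexicographically, the label sequences of $f_{first}(\gamma)$. Then the homology facets of this shelling are exactly those maximal chains $\gamma$ of $P^S$ for which $f_{rib}(f_{first}(\gamma))$ is a standard filling of $\mathrm{Rib}(s_1,s_2-s_1,\dots,n-s_k)$ whose reading word is an $\mathrm{NBC}^+$ basis of $P$.
   Context: The minimal labeling labels each cover relation $u\prec v$ by the atom $\min(A(v)\setminus A(u))$, where $A(x)$ is the set of atoms below $x$; the label sequence of a maximal chain $\hat0\prec u_1\prec\dots\prec\hat1$ is the sequence of its edge labels. $P^S$ is the subposet of elements with ranks in $S$. For a maximal chain $\gamma$ of $P^S$, $f_{first}(\gamma)$ is the maximal chain of $P$ containing $\gamma$ whose label sequence is lexicographically smallest. For a maximal chain $M$ of $P$, $f_{rib}(M)$ is the filling of $\mathrm{Rib}(s_1,\dots,n-s_k)$ whose reading word is the label sequence of $M$. A shelling is an order $F_1,F_2,\dots$ of facets such that each $\overline{F_j}\cap\bigcup_{i<j}\overline{F_i}$ is pure of codimension one in $\overline{F_j}$; a homology facet is one with $\overline{F_j}\cap\bigcup_{i<j}\overline{F_i}=\partial F_j$. $\mathrm{Rib}(r_1,\dots,r_p)$: ribbon with rows of lengths $r_1,\dots,r_p$ bottom to top, each row starting directly above the last box of the row below;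 reading word: left to right, bottom row to top; standard: entries increase in atom order left to right along rows and top to bottom down columns. NBC independent set: atoms $\{b_1,\dots,b_l\}$ whose join has rank $l$ and such that every atom outside the set below the join is later in the order than some $b_j$. $\mathrm{NBC}^+$ basis: ordered NBC independent set $(b_1,\dots,b_n)$ with $b_j=\min(A(b_1\vee\dots\vee b_j)\setminus A(b_1\vee\dots\vee b_{j-1}))$ for all $j$. *)

theory Defs
  imports Main
begin

text \<open>The finite lattice P is modelled as a finite type 'a with a complete lattice
structure (every finite lattice is complete); bottom and top are bot and top.
The atom ordering a_1 < ... < a_m is given by a weight w, injective on atoms:
a_i < a_j iff w a_i < w a_j.\<close>

definition cov :: "'a::complete_lattice \<Rightarrow> 'a \<Rightarrow> bool" where
  "cov x y \<longleftrightarrow> x < y \<and> \<not> (\<exists>z. x < z \<and> z < y)"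

definition atoms :: "'a::complete_lattice set" where
  "atoms = {a. cov bot a}"

definition atoms_below :: "'a::complete_lattice \<Rightarrow> 'a set" where
  "atoms_below x = {a \<in> atoms. a \<le> x}"

definition rnk :: "'a::{finite,complete_lattice} \<Rightarrow> nat" where
  "rnk x = Max {card C | C. C \<subseteq> {y. y \<le> x} \<and> Complete_Partial_Order.chain (\<le>) C} - 1"

definition atomistic :: "'a::complete_lattice itself \<Rightarrow> bool" where
  "atomistic _ \<longleftrightarrow> (\<forall>x::'a. x = Sup (atoms_below x))"

definition semimodular :: "'a::complete_lattice itself \<Rightarrow> bool" where
  "semimodular _ \<longleftrightarrow> (\<forall>x y::'a. cov (inf x y) x \<longrightarrow> cov y (sup x y))"

definition geometric_lattice :: "'a::{finite,complete_lattice} itself \<Rightarrow> bool" where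
  "geometric_lattice T \<longleftrightarrow> atomistic T \<and> semimodular T"

definition amin :: "('a \<Rightarrow> nat) \<Rightarrow> 'a set \<Rightarrow> 'a" where
  "amin w X = (THE a. a \<in> X \<and> (\<forall>b\<in>X. w a \<le> w b))"

definition lab :: "('a::complete_lattice \<Rightarrow> nat) \<Rightarrow> 'a \<Rightarrow> 'a \<Rightarrow> 'a" where
  "lab w u v = amin w (atoms_below v - atoms_below u)"

definition maxchain :: "'a::complete_lattice list \<Rightarrow> bool" where
  "maxchain c \<longleftrightarrow> c \<noteq> [] \<and> hd c = bot \<and> last c = top \<and>
     (\<forall>i. Suc i < length c \<longrightarrow> cov (c ! i) (c ! Suc i))"

definition labs :: "('a::complete_lattice \<Rightarrow> nat) \<Rightarrow> 'a list \<Rightarrow> 'a list" where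
  "labs w c = map (\<lambda>i. lab w (c ! i) (c ! Suc i)) [0..<length c - 1]"

definition lexless :: "('a \<Rightarrow> nat) \<Rightarrow> 'a list \<Rightarrow> 'a list \<Rightarrow> bool" where
  "lexless w xs ys \<longleftrightarrow> (map w xs, map w ys) \<in> lexord {(a, b). a < b}"

definition PS :: "nat set \<Rightarrow> 'a::{finite,complete_lattice} set" where
  "PS S = {x. rnk x \<in> S}"

text \<open>Maximal chains of P^S (= facets of the order complex of P^S).\<close>
definition maxchainsS :: "nat set \<Rightarrow> 'a::{finite,complete_lattice} set set" where
  "maxchainsS S = {C. C \<subseteq> PS S \<and> Complete_Partial_Order.chain (\<le>) C \<and>
     (\<forall>D. D \<subseteq> PS S \<and> Complete_Partial_Order.chain (\<le>) D \<and> C \<subseteq> D \<longrightarrow> D = C)}"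

definition ffirst :: "('a::complete_lattice \<Rightarrow> nat) \<Rightarrow> 'a set \<Rightarrow> 'a list" where
  "ffirst w \<gamma> = (THE M. maxchain M \<and> \<gamma> \<subseteq> set M \<and>
     (\<forall>M'. maxchain M' \<and> \<gamma> \<subseteq> set M' \<longrightarrow>
        labs w M = labs w M' \<or> lexless w (labs w M) (labs w M')))"

text \<open>Shellings of a complex given by a list of facets (faces are sets; closure of F is Pow F).\<close>
definition past :: "'a set list \<Rightarrow> nat \<Rightarrow> 'a set set" where
  "past Fs j = Pow (Fs ! j) \<inter> (\<Union>i<j. Pow (Fs ! i))"

definition pure_codim1 :: "'a set set \<Rightarrow> 'a set \<Rightarrow> bool" where
  "pure_codim1 K F \<longleftrightarrow> (\<forall>G\<in>K. (\<forall>H\<in>K. G \<subseteq> H \<longrightarrow> H = G) \<longrightarrow> card G + 1 = card F)"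

definition is_shelling :: "'a set list \<Rightarrow> bool" where
  "is_shelling Fs \<longleftrightarrow> (\<forall>j<length Fs. 0 < j \<longrightarrow> pure_codim1 (past Fs j) (Fs ! j))"

definition homology_facet :: "'a set list \<Rightarrow> nat \<Rightarrow> bool" where
  "homology_facet Fs j \<longleftrightarrow> past Fs j = {G. G \<subset> Fs ! j}"

text \<open>Ribbons. Row lengths rs = [r_1,...,r_p], rows indexed 0.. from bottom to top;
boxes are (row, column); row i starts at column rib_start rs i, directly above
the last box of row i-1.\<close>
definition rib_start :: "nat list \<Rightarrow> nat \<Rightarrow> nat" where
  "rib_start rs i = (\<Sum>j<i. rs ! j - 1)"

definition rib_boxes :: "nat list \<Rightarrow> (nat \<times> nat) set" where
  "rib_boxes rs = {(i, rib_start rs i + t) | i t. i < length rs \<and> t < rs ! i}"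

definition reading_word :: "nat list \<Rightarrow> (nat \<times> nat \<Rightarrow> 'a) \<Rightarrow> 'a list" where
  "reading_word rs F =
     concat (map (\<lambda>i. map (\<lambda>t. F (i, rib_start rs i + t)) [0..<rs ! i]) [0..<length rs])"

definition standard :: "('a \<Rightarrow> nat) \<Rightarrow> nat list \<Rightarrow> (nat \<times> nat \<Rightarrow> 'a) \<Rightarrow> bool" where
  "standard w rs F \<longleftrightarrow>
     (\<forall>i c. (i, c) \<in> rib_boxes rs \<and> (i, Suc c) \<in> rib_boxes rs \<longrightarrow> w (F (i, c)) < w (F (i, Suc c))) \<and>
     (\<forall>i c. (i, c) \<in> rib_boxes rs \<and> (Suc i, c) \<in> rib_boxes rs \<longrightarrow> w (F (Suc i, c)) < w (F (i, c)))"

definition ribrows :: "nat \<Rightarrow> nat set \<Rightarrow> nat list" where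
  "ribrows n S = (let s = sorted_list_of_set S in map2 (-) (s @ [n]) (0 # s))"

definition frib :: "('a::complete_lattice \<Rightarrow> nat) \<Rightarrow> nat list \<Rightarrow> 'a list \<Rightarrow> nat \<times> nat \<Rightarrow> 'a" where
  "frib w rs M = (\<lambda>(i, c). labs w M ! (sum_list (take i rs) + (c - rib_start rs i)))"

definition nbc_indep :: "('a::{finite,complete_lattice} \<Rightarrow> nat) \<Rightarrow> 'a set \<Rightarrow> bool" where
  "nbc_indep w B \<longleftrightarrow> B \<subseteq> atoms \<and> rnk (Sup B) = card B \<and>
     (\<forall>a \<in> atoms_below (Sup B) - B. \<exists>b\<in>B. w b < w a)"

definition nbc_plus :: "('a::{finite,complete_lattice} \<Rightarrow> nat) \<Rightarrow> nat \<Rightarrow> 'a list \<Rightarrow> bool" where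
  "nbc_plus w n bs \<longleftrightarrow> length bs = n \<and> distinct bs \<and> nbc_indep w (set bs) \<and>
     (\<forall>j<n. bs ! j = amin w (atoms_below (Sup (set (take (Suc j) bs))) - atoms_below (Sup (set (take j bs)))))"

end

theory Submission
  imports Defs "HOL-Library.List_Lexorder"
begin

text \<open>The minimal labelling is an EL-labelling: on an interval where a maximal chain only ascends,
  its labels are lexicographically first among all chains through that interval, and the labels of
  any maximal chain of P form an NBC+ basis. A descent of a maximal chain M at rank p can be removed
  by replacing M!p by the join of M!(p-1) with the smallest atom of the rank-two interval around it,
  which lowers the label sequence while fixing every other rank. Hence M = f_first(\<gamma>) ascends at
  every rank outside S. The facet \<gamma> is a homology facet iff every face \<gamma> - {M!p} (p \<in> S) lies in an
  earlier facet. A descent of M at p produces such an earlier facet by the swap; an ascent at p makes M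
  lexicographically first among all chains through \<gamma> - {M!p}, so no earlier facet contains that face.
  Thus the homology facets are the \<gamma> whose f_first has descent set exactly S, which is the condition
  for the ribbon filling f_rib(M) to be standard; its reading word, the label sequence of M, is always
  an NBC+ basis.\<close>

section \<open>Covers, atoms and saturated chains\<close>

lemma cov_imp_less: "cov x y \<Longrightarrow> x < y"
  by (simp add: cov_def)

lemma cov_betweenD: "cov x y \<Longrightarrow> x \<le> z \<Longrightarrow> z \<le> y \<Longrightarrow> z = x \<or> z = y"
  unfolding cov_def by (metis order.not_eq_order_implies_strict)

lemma le_atomD: "a \<in> atoms \<Longrightarrow> z \<le> a \<Longrightarrow> z = bot \<or> z = a"
  using cov_betweenD[of bot a z] by (simp add: atoms_def)

lemma atom_not_le_bot: "a \<in> atoms \<Longrightarrow> \<not> a \<le> bot"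
  using cov_imp_less[of bot a] by (simp add: atoms_def bot_unique)

lemma cov_sup_eq:
  assumes "cov x y" and "a \<le> y" and "\<not> a \<le> x"
  shows "sup x a = y"
proof -
  have "sup x a \<le> y"
    using assms cov_imp_less[of x y] by simp
  moreover have "sup x a \<noteq> x"
    using assms(3) by (auto simp: sup.absorb_iff1)
  ultimately show ?thesis
    using cov_betweenD[OF assms(1), of "sup x a"] by simp
qed

lemma atomistic_less_imp_new_atom:
  assumes "atomistic TYPE('a::complete_lattice)" and "(x::'a) < y"
  shows "atoms_below y - atoms_below x \<noteq> {}"
proof
  assume "atoms_below y - atoms_below x = {}"
  then have "Sup (atoms_below y) \<le> Sup (atoms_below x)"
    by (intro Sup_subset_mono) blast
  with assms show False
    unfolding atomistic_def by (metis leD)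
qed

lemma amin_eqI:
  assumes "a \<in> X" and "\<forall>b\<in>X. w a \<le> w b" and "inj_on w X"
  shows "amin w X = a"
  unfolding amin_def
proof (rule the_equality)
  fix b assume "b \<in> X \<and> (\<forall>c\<in>X. w b \<le> w c)"
  with assms show "b = a" by (metis inj_onD order_antisym)
qed (use assms in blast)

lemma amin_in_minimal:
  assumes "finite X" and "X \<noteq> {}" and "inj_on w X"
  shows "amin w X \<in> X \<and> (\<forall>b\<in>X. w (amin w X) \<le> w b)"
proof -
  have "Min (w ` X) \<in> w ` X"
    using assms by simp
  then obtain a where "a \<in> X" "w a = Min (w ` X)"
    by auto
  with assms have "a \<in> X" "\<forall>b\<in>X. w a \<le> w b"
    by simp_all
  with amin_eqI[OF this \<open>inj_on w X\<close>] show ?thesis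
    by simp
qed

lemma finite_chain_Sup_in:
  fixes C :: "'a::complete_lattice set"
  assumes "finite C" and "C \<noteq> {}" and "Complete_Partial_Order.chain (\<le>) C"
  shows "Sup C \<in> C"
  using assms
proof (induction C rule: finite_ne_induct)
  case (insert x F)
  then have "Sup F \<in> F"
    using chain_subset[of "(\<le>)" "insert x F" F] by blast
  with insert.prems have "x \<le> Sup F \<or> Sup F \<le> x"
    unfolding chain_def by blast
  with \<open>Sup F \<in> F\<close> show ?case
    by (auto simp: sup.absorb1 sup.absorb2)
qed simp

lemma exists_crossing_step:
  assumes "\<not> P q" and "P b" and "q \<le> b"
  shows "\<exists>r. q \<le> r \<and> r < b \<and> \<not> P r \<and> P (Suc r)"
  using assms(3,2)
proof (induction b rule: dec_induct)
  case (step b)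
  then show ?case
    by (cases "P b") (auto intro: less_SucI)
qed (use assms(1) in simp)

definition sat_chain :: "'a::complete_lattice \<Rightarrow> 'a \<Rightarrow> 'a list \<Rightarrow> bool" where
  "sat_chain y x c \<longleftrightarrow> c \<noteq> [] \<and> hd c = y \<and> last c = x \<and>
     (\<forall>i. Suc i < length c \<longrightarrow> cov (c ! i) (c ! Suc i))"

lemma maxchain_iff_sat_chain: "maxchain c \<longleftrightarrow> sat_chain bot top c"
  by (simp add: maxchain_def sat_chain_def)

lemma sat_chain_ne: "sat_chain y x c \<Longrightarrow> c \<noteq> []"
  by (simp add: sat_chain_def)

lemma sat_chain_first: "sat_chain y x c \<Longrightarrow> c ! 0 = y"
  by (cases c) (auto simp: sat_chain_def)

lemma sat_chain_last: "sat_chain y x c \<Longrightarrow> c ! (length c - 1) = x"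
  by (auto simp: sat_chain_def last_conv_nth)

lemma sat_chain_cov: "sat_chain y x c \<Longrightarrow> Suc i < length c \<Longrightarrow> cov (c ! i) (c ! Suc i)"
  by (simp add: sat_chain_def)

lemma sat_chain_sorted: "sat_chain y x c \<Longrightarrow> sorted_wrt (<) c"
  by (simp add: sorted_wrt_iff_nth_Suc_transp sat_chain_cov cov_imp_less)

lemma sat_chain_less: "sat_chain y x c \<Longrightarrow> i < j \<Longrightarrow> j < length c \<Longrightarrow> c ! i < c ! j"
  using sat_chain_sorted sorted_wrt_nth_less by blast

lemma sat_chain_le: "sat_chain y x c \<Longrightarrow> i \<le> j \<Longrightarrow> j < length c \<Longrightarrow> c ! i \<le> c ! j"
  using sat_chain_less[of y x c i j] by (cases "i = j") auto

lemma sat_chain_bounds: "sat_chain y x c \<Longrightarrow> i < length c \<Longrightarrow> y \<le> c ! i \<and> c ! i \<le> x"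
  using sat_chain_le[of y x c 0 i] sat_chain_le[of y x c i "length c - 1"]
    sat_chain_first[of y x c] sat_chain_last[of y x c] by simp

lemma sat_chain_length_ge_2: "sat_chain y x c \<Longrightarrow> y < x \<Longrightarrow> 2 \<le> length c"
  using sat_chain_first[of y x c] sat_chain_last[of y x c] sat_chain_ne[of y x c]
  by (cases c) (auto simp: numeral_2_eq_2 Suc_le_eq)

lemma sat_chain_le_ends: "sat_chain y x c \<Longrightarrow> y \<le> x"
  using sat_chain_bounds[of y x c 0] sat_chain_ne[of y x c] by auto

lemma sat_chain_chain:
  assumes "sat_chain y x c"
  shows "Complete_Partial_Order.chain (\<le>) (set c)"
proof (rule chainI)
  fix a b assume "a \<in> set c" "b \<in> set c"
  then obtain i j where "i < length c" "j < length c" "a = c ! i" "b = c ! j"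
    by (auto simp: in_set_conv_nth)
  then show "a \<le> b \<or> b \<le> a"
    using sat_chain_le[OF assms] nat_le_linear[of i j] by blast
qed

lemma sat_chain_Cons: "cov y u \<Longrightarrow> sat_chain u x c \<Longrightarrow> sat_chain y x (y # c)"
  unfolding sat_chain_def by (auto simp: nth_Cons hd_conv_nth split: nat.splits)

lemma sat_chain_ConsD:
  assumes "sat_chain y x (y' # c)" and "c \<noteq> []"
  shows "sat_chain (hd c) x c \<and> cov y (hd c)"
proof -
  have "cov ((y' # c) ! Suc i) ((y' # c) ! Suc (Suc i))" if "Suc i < length c" for i
    using sat_chain_cov[OF assms(1), of "Suc i"] that by simp
  with assms show ?thesis
    unfolding sat_chain_def by (cases c) (auto simp: nth_Cons')
qed

lemma sat_chain_append: "sat_chain y z c \<Longrightarrow> sat_chain z x d \<Longrightarrow> sat_chain y x (c @ tl d)"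
proof (induction c arbitrary: y)
  case (Cons a c)
  show ?case
  proof (cases "c = []")
    case True
    with Cons.prems show ?thesis
      by (cases d) (auto simp: sat_chain_def)
  next
    case False
    with Cons.prems have "sat_chain (hd c) z c" "cov y (hd c)" "a = y"
      using sat_chain_ConsD by (auto simp: sat_chain_def)
    with Cons.IH[OF _ Cons.prems(2)] show ?thesis
      using sat_chain_Cons by fastforce
  qed
qed (simp add: sat_chain_def)

lemma sat_chain_append_length:
  "sat_chain y z c \<Longrightarrow> sat_chain z x d \<Longrightarrow> length (c @ tl d) = length c + length d - 1"
  by (cases d) (auto simp: sat_chain_def)

lemma sat_chain_take: "sat_chain y x c \<Longrightarrow> i < length c \<Longrightarrow> sat_chain y (c ! i) (take (Suc i) c)"
  unfolding sat_chain_def by (auto simp: last_conv_nth hd_conv_nth)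

lemma sat_chain_update:
  assumes "sat_chain y x c" and "0 < p" and "Suc p < length c"
    and "cov (c ! (p - 1)) z" and "cov z (c ! Suc p)"
  shows "sat_chain y x (c[p := z])"
  using assms unfolding sat_chain_def
  by (auto simp: nth_list_update hd_conv_nth last_conv_nth)

lemma sorted_wrt_less_distinct: "sorted_wrt (<) (xs::'a::order list) \<Longrightarrow> distinct xs"
  by (induction xs) auto

lemma sat_chain_distinct: "sat_chain y x c \<Longrightarrow> distinct c"
  using sat_chain_sorted sorted_wrt_less_distinct by blast

lemma sat_chain_refl_iff: "sat_chain y y c \<longleftrightarrow> c = [y]"
proof
  assume c: "sat_chain y y c"
  have "\<not> 2 \<le> length c"
  proof
    assume "2 \<le> length c"
    then have "c ! 0 < c ! (length c - 1)"
      using sat_chain_less[OF c, of 0 "length c - 1"] by simp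
    then show False
      using sat_chain_first[OF c] sat_chain_last[OF c] by simp
  qed
  with c show "c = [y]"
    by (cases c) (auto simp: sat_chain_def Suc_le_eq)
qed (simp add: sat_chain_def)

lemma sat_chain_step:
  assumes "sat_chain y x c" and "y < x"
  obtains u c' where "c = y # c'" and "cov y u" and "sat_chain u x c'"
proof -
  obtain c' where c': "c = y # c'" "c' \<noteq> []"
    using sat_chain_length_ge_2[OF assms] sat_chain_first[OF assms(1)]
    by (cases c) (auto simp: Suc_le_eq)
  with that sat_chain_ConsD[of y x y c'] assms(1) show ?thesis
    by blast
qed

lemma exists_cov_below:
  fixes x y :: "'a::{finite,complete_lattice}"
  assumes "y < x"
  shows "\<exists>z. y \<le> z \<and> cov z x"
proof -
  obtain m where m: "y \<le> m" "m < x" and max: "\<forall>b. y \<le> b \<and> b < x \<longrightarrow> m \<le> b \<longrightarrow> m = b"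
    using finite_has_maximal2[of "{z. y \<le> z \<and> z < x}" y] assms by auto
  have "\<not> u < x" if "m < u" for u
    using max m that by (metis less_le order_trans)
  with m show ?thesis
    by (auto simp: cov_def)
qed

lemma sat_chain_exists: "(y::'a::{finite,complete_lattice}) \<le> x \<Longrightarrow> \<exists>c. sat_chain y x c"
proof (induction x rule: measure_induct_rule[where f = "\<lambda>x. card {z. z < x}"])
  case (less x)
  show ?case
  proof (cases "y = x")
    case True
    then show ?thesis
      by (intro exI[of _ "[y]"]) (simp add: sat_chain_def)
  next
    case False
    with less.prems have "y < x"
      by simp
    then obtain z where z: "y \<le> z" "cov z x"
      using exists_cov_below by blast
    then have "{u. u < z} \<subset> {u. u < x}"
      using cov_imp_less[of z x] by auto
    then have "card {u. u < z} < card {u. u < x}"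
      by (simp add: psubset_card_mono)
    with less.IH z(1) obtain c where "sat_chain y z c"
      by blast
    moreover have "sat_chain z x [z, x]"
      using z(2) by (simp add: sat_chain_def nth_Cons split: nat.splits)
    ultimately show ?thesis
      using sat_chain_append by blast
  qed
qed

lemma chain_extends_to_sat_chain:
  fixes C :: "'a::{finite,complete_lattice} set"
  assumes "Complete_Partial_Order.chain (\<le>) C" and "\<forall>z\<in>C. y \<le> z \<and> z \<le> x" and "y \<le> x"
  shows "\<exists>c. sat_chain y x c \<and> C \<subseteq> set c"
  using assms
proof (induction "card C" arbitrary: C x rule: less_induct)
  case less
  show ?case
  proof (cases "C = {}")
    case True
    then show ?thesis
      using sat_chain_exists[OF less.prems(3)] by auto
  next
    case False
    let ?m = "Sup C"
    have "?m \<in> C"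
      using finite_chain_Sup_in[OF _ False less.prems(1)] by simp
    then have "card (C - {?m}) < card C"
      by (rule card_Diff1_less[OF finite])
    moreover have "Complete_Partial_Order.chain (\<le>) (C - {?m})"
      using less.prems(1) chain_subset by blast
    moreover have "\<forall>z\<in>C - {?m}. y \<le> z \<and> z \<le> ?m"
      using less.prems(2) Sup_upper[of _ C] by blast
    ultimately obtain c where c: "sat_chain y ?m c" "C - {?m} \<subseteq> set c"
      using less.hyps \<open>?m \<in> C\<close> less.prems(2) by meson
    obtain d where d: "sat_chain ?m x d"
      using sat_chain_exists[of ?m x] less.prems(2) \<open>?m \<in> C\<close> by blast
    have "?m \<in> set c"
      using sat_chain_last[OF c(1)] sat_chain_ne[OF c(1)] by (metis last_conv_nth last_in_set)
    with c(2) have "C \<subseteq> set (c @ tl d)"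
      by auto
    then show ?thesis
      using sat_chain_append[OF c(1) d] by blast
  qed
qed

section \<open>Rank in semimodular lattices\<close>

context
  assumes semimodular: "semimodular TYPE('a::{finite,complete_lattice})"
begin

lemma semimodular_cov_sup_covs:
  assumes "cov y u" and "cov y v" and "u \<noteq> (v::'a)"
  shows "cov u (sup u v)" and "cov v (sup u v)"
proof -
  have "inf u v = y"
  proof (rule ccontr)
    assume "inf u v \<noteq> y"
    moreover have "y \<le> inf u v"
      using cov_imp_less[OF assms(1)] cov_imp_less[OF assms(2)] by (simp add: less_imp_le)
    ultimately have "inf u v = u"
      using cov_betweenD[OF assms(1), of "inf u v"] by simp
    then have "y < u" "u < v"
      using assms(3) cov_imp_less[OF assms(1)] inf.absorb_iff1[of u v] by auto
    with assms(2) show False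
      by (auto simp: cov_def)
  qed
  then have "cov (inf v u) v" "cov (inf u v) u"
    using assms(1,2) by (simp_all add: inf_commute)
  then have "cov u (sup v u)" "cov v (sup u v)"
    using semimodular unfolding semimodular_def by blast+
  then show "cov u (sup u v)" "cov v (sup u v)"
    by (simp_all add: sup_commute)
qed

lemma semimodular_cov_sup_atom:
  assumes "a \<in> atoms" and "\<not> a \<le> (x::'a)"
  shows "cov x (sup x a)"
proof -
  have "inf a x = bot"
    using le_atomD[OF \<open>a \<in> atoms\<close>, of "inf a x"] \<open>\<not> a \<le> x\<close> by (metis inf.cobounded1 inf.cobounded2)
  then have "cov (inf a x) a"
    using \<open>a \<in> atoms\<close> by (simp add: atoms_def)
  with semimodular show ?thesis
    unfolding semimodular_def by (metis sup_commute)
qed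

text \<open>Jordan--Dedekind: two saturated chains leaving y through different covers u and v can both
  be continued through sup u v.\<close>

lemma sat_chains_same_length:
  "sat_chain y (x::'a) c \<Longrightarrow> sat_chain y x d \<Longrightarrow> length c = length d"
proof (induction "length c" arbitrary: y c d rule: less_induct)
  case less
  have "y \<le> x"
    using sat_chain_le_ends[OF less.prems(1)] .
  show ?case
  proof (cases "y = x")
    case True
    then show ?thesis
      using less.prems by (simp add: sat_chain_refl_iff)
  next
    case False
    with \<open>y \<le> x\<close> have "y < x"
      by simp
    obtain u c' where c: "c = y # c'" "cov y u" "sat_chain u x c'"
      using sat_chain_step[OF less.prems(1) \<open>y < x\<close>] .
    obtain v d' where d: "d = y # d'" "cov y v" "sat_chain v x d'"
      using sat_chain_step[OF less.prems(2) \<open>y < x\<close>] .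
    have IH: "length e = length e'" if "length e < length c" "sat_chain z x e" "sat_chain z x e'" for z e e'
      using less.hyps[OF that] .
    have shorter: "length c' < length c"
      using c(1) by simp
    have "length c' = length d'"
    proof (cases "u = v")
      case True
      then show ?thesis
        using IH[OF shorter c(3)] d(3) by blast
    next
      case False
      then have "cov u (sup u v)" "cov v (sup u v)"
        using semimodular_cov_sup_covs c(2) d(2) by blast+
      moreover have "sup u v \<le> x"
        using sat_chain_le_ends[OF c(3)] sat_chain_le_ends[OF d(3)] by simp
      then obtain e where "sat_chain (sup u v) x e"
        using sat_chain_exists by blast
      ultimately have "sat_chain u x (u # e)" "sat_chain v x (v # e)"
        using sat_chain_Cons by blast+
      then have "length c' = length (v # e)" "length (v # e) = length d'"
        using IH[OF shorter c(3)] IH[of "v # e" v d'] shorter d(3) by auto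
      then show ?thesis
        by simp
    qed
    with c(1) d(1) show ?thesis
      by simp
  qed
qed

lemma chain_card_le_sat_chain_length:
  assumes "Complete_Partial_Order.chain (\<le>) C" and "C \<subseteq> {z. z \<le> x}" and "sat_chain bot (x::'a) c"
  shows "card C \<le> length c"
proof -
  obtain d where d: "sat_chain bot x d" "C \<subseteq> set d"
    using chain_extends_to_sat_chain[OF assms(1), of bot x] assms(2) by auto
  then have "card C \<le> length d"
    using card_mono[of "set d" C] card_length[of d] by simp
  with sat_chains_same_length[OF d(1) assms(3)] show ?thesis
    by simp
qed

lemma rnk_sat_chain: "sat_chain bot (x::'a) c \<Longrightarrow> rnk x = length c - 1"
proof -
  assume c: "sat_chain bot x c"
  let ?K = "{card C |C. C \<subseteq> {y. y \<le> x} \<and> Complete_Partial_Order.chain (\<le>) C}"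
  have "set c \<subseteq> {y. y \<le> x}"
  proof
    fix z assume "z \<in> set c"
    then obtain i where "i < length c" "z = c ! i"
      by (auto simp: in_set_conv_nth)
    then show "z \<in> {y. y \<le> x}"
      using sat_chain_bounds[OF c] by simp
  qed
  then have "length c = card (set c) \<and> set c \<subseteq> {y. y \<le> x} \<and> Complete_Partial_Order.chain (\<le>) (set c)"
    using distinct_card[OF sat_chain_distinct[OF c]] sat_chain_chain[OF c] by simp
  then have "length c \<in> ?K"
    by blast
  moreover have bound: "k \<le> length c" if "k \<in> ?K" for k
  proof -
    from that obtain C where "k = card C" "C \<subseteq> {y. y \<le> x}" "Complete_Partial_Order.chain (\<le>) C"
      by blast
    with chain_card_le_sat_chain_length[OF _ _ c] show ?thesis
      by simp
  qed
  moreover have "finite ?K"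
    using bound by (intro finite_subset[of ?K "{..length c}"]) auto
  ultimately have "Max ?K = length c"
    by (intro Max_eqI)
  then show ?thesis
    unfolding rnk_def by simp
qed

lemma rnk_cov: "cov (y::'a) x \<Longrightarrow> rnk x = Suc (rnk y)"
proof -
  assume yx: "cov y x"
  obtain c where c: "sat_chain bot y c"
    using sat_chain_exists[of bot y] by auto
  have "sat_chain y x [y, x]"
    using yx by (simp add: sat_chain_def nth_Cons split: nat.splits)
  from rnk_sat_chain[OF sat_chain_append[OF c this]] rnk_sat_chain[OF c] sat_chain_ne[OF c]
  show ?thesis
    by simp
qed

lemma rnk_strict_mono: "(y::'a) < x \<Longrightarrow> rnk y < rnk x"
proof -
  assume yx: "y < x"
  obtain c where c: "sat_chain bot y c"
    using sat_chain_exists[of bot y] by auto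
  obtain d where d: "sat_chain y x d"
    using sat_chain_exists[OF less_imp_le[OF yx]] by auto
  show ?thesis
    using rnk_sat_chain[OF sat_chain_append[OF c d]] rnk_sat_chain[OF c] sat_chain_append_length[OF c d]
      sat_chain_ne[OF c] sat_chain_length_ge_2[OF d yx] by (simp add: less_diff_conv)
qed

lemma cov_if_rnk_Suc:
  assumes "(y::'a) \<le> x" and "rnk x = Suc (rnk y)"
  shows "cov y x"
  unfolding cov_def
proof (intro conjI notI)
  show "y < x"
    using assms by (auto simp: order.strict_iff_order)
  assume "\<exists>z. y < z \<and> z < x"
  then obtain z where "y < z" "z < x"
    by blast
  with assms(2) show False
    using rnk_strict_mono[of y z] rnk_strict_mono[of z x] by simp
qed

lemma maxchain_rnk_nth: "maxchain (M::'a list) \<Longrightarrow> i < length M \<Longrightarrow> rnk (M ! i) = i"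
  using rnk_sat_chain[OF sat_chain_take[of bot top M i]] by (simp add: maxchain_iff_sat_chain)

lemma maxchain_length: "maxchain (M::'a list) \<Longrightarrow> length M = Suc (rnk (top::'a))"
  using rnk_sat_chain[of top M] sat_chain_ne[of bot top M] by (simp add: maxchain_iff_sat_chain)

end

section \<open>The minimal labelling and f_first\<close>

lemma lexless_iff_less: "lexless w xs ys \<longleftrightarrow> map w xs < map w ys"
  by (simp add: lexless_def list_less_def)

lemma lexless_eq_length_iff:
  assumes "length xs = length ys"
  shows "lexless w xs ys \<longleftrightarrow> (\<exists>q<length xs. (\<forall>i<q. w (xs ! i) = w (ys ! i)) \<and> w (xs ! q) < w (ys ! q))"
proof -
  have "take q (map w xs) = take q (map w ys) \<longleftrightarrow> (\<forall>i<q. w (xs ! i) = w (ys ! i))" if "q < length xs" for q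
    using that assms by (auto simp: list_eq_iff_nth_eq)
  then show ?thesis
    unfolding lexless_def lexord_take_index_conv using assms by auto
qed

lemma labs_length: "length (labs w c) = length c - 1"
  by (simp add: labs_def)

lemma labs_nth: "i < length c - 1 \<Longrightarrow> labs w c ! i = lab w (c ! i) (c ! Suc i)"
  by (simp add: labs_def)

locale geometric_lattice_atom_order =
  fixes w :: "'a::{finite,complete_lattice} \<Rightarrow> nat"
  assumes geometric: "geometric_lattice TYPE('a)"
    and atom_order: "inj_on w atoms"
begin

lemma semimodular: "semimodular TYPE('a)"
  using geometric by (simp add: geometric_lattice_def)

lemma atom_eqI: "a \<in> atoms \<Longrightarrow> b \<in> atoms \<Longrightarrow> w a = w b \<Longrightarrow> a = b"
  using atom_order by (simp add: inj_on_def)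

lemma lab_in: "cov (u::'a) v \<Longrightarrow> lab w u v \<in> atoms_below v - atoms_below u"
  and lab_minimal: "cov (u::'a) v \<Longrightarrow> b \<in> atoms_below v - atoms_below u \<Longrightarrow> w (lab w u v) \<le> w b"
proof -
  assume "cov u v"
  then have "atoms_below v - atoms_below u \<noteq> {}"
    using geometric atomistic_less_imp_new_atom cov_imp_less
    by (auto simp: geometric_lattice_def)
  moreover have "inj_on w (atoms_below v - atoms_below u)"
    using atom_order by (rule inj_on_subset) (auto simp: atoms_below_def)
  ultimately have "lab w u v \<in> atoms_below v - atoms_below u \<and>
      (\<forall>b\<in>atoms_below v - atoms_below u. w (lab w u v) \<le> w b)"
    unfolding lab_def by (intro amin_in_minimal) auto
  then show "lab w u v \<in> atoms_below v - atoms_below u"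
    and "b \<in> atoms_below v - atoms_below u \<Longrightarrow> w (lab w u v) \<le> w b"
    by auto
qed

lemma lab_atom: "cov (u::'a) v \<Longrightarrow> lab w u v \<in> atoms"
  using lab_in by (auto simp: atoms_below_def)

lemma lab_le: "cov (u::'a) v \<Longrightarrow> lab w u v \<le> v"
  using lab_in by (auto simp: atoms_below_def)

lemma lab_not_le: "cov (u::'a) v \<Longrightarrow> \<not> lab w u v \<le> u"
  using lab_in lab_atom by (auto simp: atoms_below_def)

lemma sup_lab: "cov (u::'a) v \<Longrightarrow> sup u (lab w u v) = v"
  using cov_sup_eq lab_le lab_not_le by blast

lemma lab_sup_min_atom:
  assumes c: "c \<in> atoms_below z - atoms_below y" and min: "\<forall>b\<in>atoms_below z - atoms_below y. w c \<le> w b"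
    and "(y::'a) \<le> z"
  shows "cov y (sup y c)" and "lab w y (sup y c) = c"
proof -
  have "c \<in> atoms" "c \<le> z" "\<not> c \<le> y"
    using c by (auto simp: atoms_below_def)
  then show cov: "cov y (sup y c)"
    using semimodular_cov_sup_atom[OF semimodular] by blast
  have "sup y c \<le> z"
    using \<open>y \<le> z\<close> \<open>c \<le> z\<close> by simp
  then have "lab w y (sup y c) \<in> atoms_below z - atoms_below y"
    using lab_in[OF cov] by (auto simp: atoms_below_def intro: order_trans)
  with min have "w c \<le> w (lab w y (sup y c))"
    by blast
  moreover have "w (lab w y (sup y c)) \<le> w c"
    using lab_minimal[OF cov] \<open>c \<in> atoms\<close> \<open>\<not> c \<le> y\<close> by (simp add: atoms_below_def)
  ultimately show "lab w y (sup y c) = c"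
    using atom_eqI[OF lab_atom[OF cov] \<open>c \<in> atoms\<close>] by simp
qed

lemma maxchain_nth_Suc: "maxchain (M::'a list) \<Longrightarrow> Suc i < length M \<Longrightarrow> M ! Suc i = sup (M ! i) (labs w M ! i)"
  using sup_lab[of "M ! i" "M ! Suc i"] labs_nth[of i M w] by (simp add: maxchain_def)

lemma labs_atoms: "maxchain (M::'a list) \<Longrightarrow> set (labs w M) \<subseteq> atoms"
  by (auto simp: labs_def maxchain_def lab_atom)

lemma maxchain_eq_upto_labs:
  assumes "maxchain (M::'a list)" and "maxchain N" and "\<forall>i<q. labs w M ! i = labs w N ! i"
    and "q < length M" and "q < length N"
  shows "M ! q = N ! q"
  using assms(3-5)
proof (induction q)
  case 0
  then show ?case
    using assms(1,2) sat_chain_first[of bot top M] sat_chain_first[of bot top N]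
    by (simp add: maxchain_iff_sat_chain)
next
  case (Suc q)
  then show ?case
    using maxchain_nth_Suc[OF assms(1)] maxchain_nth_Suc[OF assms(2)] by simp
qed

lemma maxchain_labs_inj:
  assumes "maxchain (M::'a list)" and "maxchain N" and "map w (labs w M) = map w (labs w N)"
  shows "M = N"
proof -
  have "inj_on w (set (labs w M) \<union> set (labs w N))"
    using atom_order labs_atoms[OF assms(1)] labs_atoms[OF assms(2)] by (auto intro: inj_on_subset)
  then have labs: "labs w M = labs w N"
    using assms(3) inj_on_map_eq_map by blast
  have "length M = length N"
    using maxchain_length[OF semimodular assms(1)] maxchain_length[OF semimodular assms(2)] by simp
  then show ?thesis
    using maxchain_eq_upto_labs[OF assms(1,2)] labs by (simp add: list_eq_iff_nth_eq)
qed

lemma labs_lex_le_iff: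
  assumes "maxchain (M::'a list)" and "maxchain M'"
  shows "labs w M = labs w M' \<or> lexless w (labs w M) (labs w M') \<longleftrightarrow> map w (labs w M) \<le> map w (labs w M')"
  using maxchain_labs_inj[OF assms] by (auto simp: lexless_iff_less order.order_iff_strict)

lemma ffirst_eqI:
  assumes m: "maxchain (m::'a list)" "\<gamma> \<subseteq> set m"
    and min: "\<And>M. maxchain M \<Longrightarrow> \<gamma> \<subseteq> set M \<Longrightarrow> map w (labs w m) \<le> map w (labs w M)"
  shows "ffirst w \<gamma> = m"
  unfolding ffirst_def
proof (rule the_equality)
  show "maxchain m \<and> \<gamma> \<subseteq> set m \<and> (\<forall>M'. maxchain M' \<and> \<gamma> \<subseteq> set M' \<longrightarrow>
      labs w m = labs w M' \<or> lexless w (labs w m) (labs w M'))"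
    using m min labs_lex_le_iff by blast
  fix M assume M: "maxchain M \<and> \<gamma> \<subseteq> set M \<and> (\<forall>M'. maxchain M' \<and> \<gamma> \<subseteq> set M' \<longrightarrow>
      labs w M = labs w M' \<or> lexless w (labs w M) (labs w M'))"
  then have "map w (labs w M) \<le> map w (labs w m)"
    using m labs_lex_le_iff by blast
  with M min[of M] have "map w (labs w M) = map w (labs w m)"
    by simp
  with M m(1) show "M = m"
    using maxchain_labs_inj by blast
qed

lemma ffirst_lex_minimal:
  assumes "maxchain (M0::'a list)" and "\<gamma> \<subseteq> set M0"
  shows "maxchain (ffirst w \<gamma>)" and "\<gamma> \<subseteq> set (ffirst w \<gamma>)"
    and "maxchain M \<Longrightarrow> \<gamma> \<subseteq> set M \<Longrightarrow> map w (labs w (ffirst w \<gamma>)) \<le> map w (labs w M)"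
proof -
  let ?Ms = "{M. maxchain M \<and> \<gamma> \<subseteq> set M}"
  have "?Ms \<subseteq> {xs. set xs \<subseteq> UNIV \<and> distinct xs}"
  proof
    fix M assume "M \<in> ?Ms"
    then show "M \<in> {xs. set xs \<subseteq> UNIV \<and> distinct xs}"
      using sat_chain_distinct[of bot top M] by (simp add: maxchain_iff_sat_chain)
  qed
  then have "finite ?Ms"
    by (rule finite_subset) (rule finite_subset_distinct[OF finite])
  moreover have "?Ms \<noteq> {}"
    using assms by blast
  ultimately obtain m where "is_arg_min (\<lambda>M. map w (labs w M)) (\<lambda>M. M \<in> ?Ms) m"
    using ex_is_arg_min_if_finite by blast
  then have m: "maxchain m" "\<gamma> \<subseteq> set m"
    and min: "\<And>M. maxchain M \<Longrightarrow> \<gamma> \<subseteq> set M \<Longrightarrow> map w (labs w m) \<le> map w (labs w M)"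
    by (simp_all add: is_arg_min_linorder)
  with ffirst_eqI[OF m min] show "maxchain (ffirst w \<gamma>)" "\<gamma> \<subseteq> set (ffirst w \<gamma>)"
    and "maxchain M \<Longrightarrow> \<gamma> \<subseteq> set M \<Longrightarrow> map w (labs w (ffirst w \<gamma>)) \<le> map w (labs w M)"
    by simp_all
qed

end

section \<open>Ascents and the restriction to the ranks in S\<close>

definition ascent :: "('a \<Rightarrow> nat) \<Rightarrow> 'a list \<Rightarrow> nat \<Rightarrow> bool" where
  "ascent w xs p \<longleftrightarrow> w (xs ! (p - 1)) < w (xs ! p)"

lemma ascents_imp_weight_mono:
  assumes "\<forall>i. q < i \<and> i \<le> r \<longrightarrow> ascent w xs i" and "q \<le> r"
  shows "w (xs ! q) \<le> w (xs ! r)"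
proof (rule lift_Suc_mono_le_ivl[where N = "{q..<r}" and f = "\<lambda>i. w (xs ! i)"])
  show "w (xs ! i) \<le> w (xs ! Suc i)" if "i \<in> {q..<r}" for i
    using assms(1) that by (auto simp: ascent_def dest!: spec[of _ "Suc i"])
qed (use assms(2) in auto)

lemma labs_update_prefix: "i < p - 1 \<Longrightarrow> p < length c \<Longrightarrow> labs w (c[p := z]) ! i = labs w c ! i"
  using labs_nth[of i "c[p := z]" w] labs_nth[of i c w] by simp

lemma labs_update_before: "0 < p \<Longrightarrow> p < length c \<Longrightarrow> labs w (c[p := z]) ! (p - 1) = lab w (c ! (p - 1)) z"
  using labs_nth[of "p - 1" "c[p := z]" w] by simp

lemma nth_update_image: "m \<notin> S \<Longrightarrow> (!) (M[m := x]) ` S = (!) M ` S"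
  by (rule image_cong) (auto intro: nth_list_update_neq)

locale rank_selection =
  fixes n :: nat and S :: "nat set"
  assumes selection: "S \<subseteq> {1..<n}"

locale selected_geometric_lattice =
  geometric_lattice_atom_order w + rank_selection n S
  for w :: "'a::{finite,complete_lattice} \<Rightarrow> nat" and n S +
  assumes rank_top: "rnk (top::'a) = n"
begin

lemma maxchain_length_n: "maxchain (M::'a list) \<Longrightarrow> length M = Suc n"
  using maxchain_length[OF semimodular] rank_top by simp

lemma labs_length_n: "maxchain (M::'a list) \<Longrightarrow> length (labs w M) = n"
  by (simp add: labs_length maxchain_length_n)

lemma maxchain_cov_nth: "maxchain (M::'a list) \<Longrightarrow> i < n \<Longrightarrow> cov (M ! i) (M ! Suc i)"
  using maxchain_length_n[of M] by (simp add: maxchain_def)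

lemma labs_nth_n: "maxchain (M::'a list) \<Longrightarrow> i < n \<Longrightarrow> labs w M ! i = lab w (M ! i) (M ! Suc i)"
  by (simp add: labs_nth maxchain_length_n)

lemma maxchain_le: "maxchain (M::'a list) \<Longrightarrow> i \<le> j \<Longrightarrow> j \<le> n \<Longrightarrow> M ! i \<le> M ! j"
  using sat_chain_le[of bot top M i j] maxchain_length_n[of M] by (simp add: maxchain_iff_sat_chain)

lemma maxchain_bot: "maxchain (M::'a list) \<Longrightarrow> M ! 0 = bot"
  using sat_chain_first[of bot top M] by (simp add: maxchain_iff_sat_chain)

lemma maxchain_top: "maxchain (M::'a list) \<Longrightarrow> M ! n = top"
  using sat_chain_last[of bot top M] maxchain_length_n[of M] by (simp add: maxchain_iff_sat_chain)

lemma maxchain_rnk: "maxchain (M::'a list) \<Longrightarrow> i \<le> n \<Longrightarrow> rnk (M ! i) = i"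
  using maxchain_rnk_nth[OF semimodular] maxchain_length_n by simp

context
  fixes M :: "'a list" and i :: nat
  assumes M: "maxchain M" and i: "i < n"
begin

lemma labs_atom: "labs w M ! i \<in> atoms"
  using lab_atom maxchain_cov_nth labs_nth_n M i by simp

lemma labs_le: "labs w M ! i \<le> M ! Suc i"
  using lab_le maxchain_cov_nth labs_nth_n M i by simp

lemma labs_not_le: "\<not> labs w M ! i \<le> M ! i"
  using lab_not_le maxchain_cov_nth labs_nth_n M i by simp

lemma labs_minimal: "b \<in> atoms \<Longrightarrow> b \<le> M ! Suc i \<Longrightarrow> \<not> b \<le> M ! i \<Longrightarrow> w (labs w M ! i) \<le> w b"
  using lab_minimal[OF maxchain_cov_nth[OF M i]] labs_nth_n[OF M i] by (simp add: atoms_below_def)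

end

lemma labs_distinct:
  assumes "maxchain (M::'a list)"
  shows "distinct (labs w M)"
proof -
  have "labs w M ! i \<noteq> labs w M ! j" if "i < j" "j < n" for i j
  proof
    assume "labs w M ! i = labs w M ! j"
    moreover have "labs w M ! i \<le> M ! j"
      using labs_le[OF assms, of i] maxchain_le[OF assms, of "Suc i" j] that by (meson le_less_trans less_imp_le order_trans Suc_leI)
    ultimately show False
      using labs_not_le[OF assms that(2)] by simp
  qed
  then show ?thesis
    unfolding distinct_conv_nth labs_length_n[OF assms] by (metis linorder_neq_iff)
qed

lemma labs_consecutive_weights_neq:
  assumes "maxchain (M::'a list)" and "0 < p" and "p < n"
  shows "w (labs w M ! (p - 1)) \<noteq> w (labs w M ! p)"
proof
  assume "w (labs w M ! (p - 1)) = w (labs w M ! p)"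
  then have "labs w M ! (p - 1) = labs w M ! p"
    using atom_eqI labs_atom[OF assms(1)] assms(2,3) by simp
  then show False
    using labs_distinct[OF assms(1)] assms(2,3) labs_length_n[OF assms(1)] by (simp add: nth_eq_iff_index_eq)
qed

lemma not_ascent_imp_descent:
  assumes "maxchain (M::'a list)" and "0 < p" and "p < n" and "\<not> ascent w (labs w M) p"
  shows "w (labs w M ! p) < w (labs w M ! (p - 1))"
  using labs_consecutive_weights_neq[OF assms(1-3)] assms(4) by (simp add: ascent_def)

lemma maxchain_inter_PS: "maxchain (M::'a list) \<Longrightarrow> set M \<inter> PS S = (!) M ` S"
proof (intro equalityI subsetI)
  fix x assume "maxchain M" "x \<in> set M \<inter> PS S"
  then obtain i where "i < length M" "x = M ! i" "rnk x \<in> S"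
    by (auto simp: in_set_conv_nth PS_def)
  with \<open>maxchain M\<close> show "x \<in> (!) M ` S"
    using maxchain_rnk maxchain_length_n by auto
next
  fix x assume "maxchain M" "x \<in> (!) M ` S"
  then obtain p where "p \<in> S" "x = M ! p"
    by blast
  with \<open>maxchain M\<close> show "x \<in> set M \<inter> PS S"
    using selection maxchain_rnk maxchain_length_n by (auto simp: PS_def)
qed

lemma maxchain_nth_inj:
  assumes "maxchain (M::'a list)" and "i \<le> n" and "j \<le> n" and "M ! i = M ! j"
  shows "i = j"
proof -
  have "i = rnk (M ! i)"
    using maxchain_rnk[OF assms(1,2)] by simp
  also have "\<dots> = j"
    using maxchain_rnk[OF assms(1,3)] assms(4) by simp
  finally show ?thesis .
qed

lemma maxchain_nth_eq_if_in_image: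
  assumes "maxchain (M::'a list)" and "maxchain N" and "t \<in> S" and "M ! t \<in> (!) N ` S"
  shows "M ! t = N ! t"
proof -
  obtain r where r: "r \<in> S" "M ! t = N ! r"
    using assms(4) by blast
  have "t \<le> n" "r \<le> n"
    using assms(3) r(1) selection by auto
  have "t = rnk (M ! t)"
    using maxchain_rnk[OF assms(1) \<open>t \<le> n\<close>] by simp
  also have "\<dots> = r"
    using maxchain_rnk[OF assms(2) \<open>r \<le> n\<close>] r(2) by simp
  finally show ?thesis
    using r(2) by simp
qed

lemma maxchain_inter_PS_maximal:
  assumes "maxchain (M::'a list)" and "D \<subseteq> PS S" and "Complete_Partial_Order.chain (\<le>) D"
    and "set M \<inter> PS S \<subseteq> D"
  shows "D = set M \<inter> PS S"
proof (intro equalityI subsetI)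
  fix y assume "y \<in> D"
  then have "rnk y \<in> S"
    using assms(2) by (auto simp: PS_def)
  then have "M ! rnk y \<in> D" and rnk: "rnk (M ! rnk y) = rnk y"
    using maxchain_inter_PS[OF assms(1)] assms(4) maxchain_rnk[OF assms(1)] selection by auto
  then have "y \<le> M ! rnk y \<or> M ! rnk y \<le> y"
    using assms(3) \<open>y \<in> D\<close> by (auto simp: chain_def)
  then have "y = M ! rnk y"
    using rnk rnk_strict_mono[OF semimodular] by (metis less_irrefl order.not_eq_order_implies_strict)
  then show "y \<in> set M \<inter> PS S"
    using maxchain_inter_PS[OF assms(1)] \<open>rnk y \<in> S\<close> by auto
qed (use assms(4) in blast)

lemma maxchain_inter_PS_in_maxchainsS: "maxchain (M::'a list) \<Longrightarrow> set M \<inter> PS S \<in> maxchainsS S"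
  unfolding maxchainsS_def
  using maxchain_inter_PS_maximal sat_chain_chain[of bot top M] chain_subset[of "(\<le>)" "set M"]
  by (auto simp: maxchain_iff_sat_chain)

lemma maxchainsS_eq_inter_PS:
  "\<gamma> \<in> maxchainsS S \<Longrightarrow> maxchain (M::'a list) \<Longrightarrow> \<gamma> \<subseteq> set M \<Longrightarrow> \<gamma> = set M \<inter> PS S"
  unfolding maxchainsS_def
  using sat_chain_chain[of bot top M] chain_subset[of "(\<le>)" "set M" "set M \<inter> PS S"]
  by (auto simp: maxchain_iff_sat_chain)

lemma maxchainsS_ffirst:
  assumes "\<gamma> \<in> maxchainsS S"
  shows "maxchain (ffirst w \<gamma>)" and "\<gamma> = (!) (ffirst w \<gamma>) ` S"
    and "maxchain M \<Longrightarrow> \<gamma> \<subseteq> set M \<Longrightarrow> map w (labs w (ffirst w \<gamma>)) \<le> map w (labs w M)"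
proof -
  obtain M0 where "maxchain M0" "\<gamma> \<subseteq> set M0"
    using assms chain_extends_to_sat_chain[of \<gamma> bot top]
    by (auto simp: maxchainsS_def maxchain_iff_sat_chain)
  from ffirst_lex_minimal[OF this] show "maxchain (ffirst w \<gamma>)" "\<gamma> = (!) (ffirst w \<gamma>) ` S"
    and "maxchain M \<Longrightarrow> \<gamma> \<subseteq> set M \<Longrightarrow> map w (labs w (ffirst w \<gamma>)) \<le> map w (labs w M)"
    using maxchainsS_eq_inter_PS[OF assms] maxchain_inter_PS by auto
qed

text \<open>A descent at p is removed by replacing M!p with the join of M!(p-1) and the smallest
  atom of the rank-two interval [M!(p-1), M!(p+1)]; this lowers the label at p - 1.\<close>

lemma maxchain_update_min_atom:
  assumes M: "maxchain (M::'a list)" and p: "0 < p" "p < n"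
    and c: "c \<in> atoms_below (M ! Suc p) - atoms_below (M ! (p - 1))"
    and c_min: "\<forall>b\<in>atoms_below (M ! Suc p) - atoms_below (M ! (p - 1)). w c \<le> w b"
  shows "maxchain (M[p := sup (M ! (p - 1)) c])"
    and "labs w (M[p := sup (M ! (p - 1)) c]) ! (p - 1) = c"
proof -
  let ?y = "M ! (p - 1)" and ?z = "M ! Suc p" and ?x = "sup (M ! (p - 1)) c"
  have "?y \<le> ?z"
    using maxchain_le[OF M] p by simp
  note cov_x = lab_sup_min_atom(1)[OF c c_min this]
    and lab_x = lab_sup_min_atom(2)[OF c c_min this]
  have "rnk ?x = p"
    using rnk_cov[OF semimodular cov_x] maxchain_rnk[OF M, of "p - 1"] p by simp
  moreover have "rnk ?z = Suc p"
    using maxchain_rnk[OF M, of "Suc p"] p by simp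
  moreover have "?x \<le> ?z"
    using c \<open>?y \<le> ?z\<close> by (simp add: atoms_below_def)
  ultimately have "cov ?x ?z"
    using cov_if_rnk_Suc[OF semimodular] by simp
  then show "maxchain (M[p := ?x])"
    using sat_chain_update[of bot top M p ?x] M p cov_x maxchain_length_n[OF M]
    by (simp add: maxchain_iff_sat_chain)
  show "labs w (M[p := ?x]) ! (p - 1) = c"
    using labs_update_before[of p M] lab_x p maxchain_length_n[OF M] by simp
qed

lemma descent_swap:
  assumes M: "maxchain (M::'a list)" and p: "0 < p" "p < n" and desc: "\<not> ascent w (labs w M) p"
  obtains x where "maxchain (M[p := x])" and "map w (labs w (M[p := x])) < map w (labs w M)"
proof -
  let ?y = "M ! (p - 1)"
  let ?X = "atoms_below (M ! Suc p) - atoms_below ?y"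
  have "?y \<le> M ! p"
    using maxchain_le[OF M, of "p - 1" p] p by simp
  then have "\<not> labs w M ! p \<le> ?y"
    using labs_not_le[OF M p(2)] order.trans by blast
  then have lab_p: "labs w M ! p \<in> ?X"
    using labs_atom[OF M p(2)] labs_le[OF M p(2)] by (simp add: atoms_below_def)
  moreover have "inj_on w ?X"
    using atom_order by (rule inj_on_subset) (auto simp: atoms_below_def)
  ultimately have "amin w ?X \<in> ?X \<and> (\<forall>b\<in>?X. w (amin w ?X) \<le> w b)"
    by (intro amin_in_minimal[OF finite]) auto
  then obtain c where c: "c \<in> ?X" and c_min: "\<forall>b\<in>?X. w c \<le> w b"
    by blast
  let ?M' = "M[p := sup ?y c]"
  note M' = maxchain_update_min_atom[OF M p c c_min]
  have "w c \<le> w (labs w M ! p)"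
    using c_min lab_p by blast
  then have "w (labs w ?M' ! (p - 1)) < w (labs w M ! (p - 1))"
    using not_ascent_imp_descent[OF M p desc] M'(2) by simp
  moreover have "\<forall>i<p - 1. w (labs w ?M' ! i) = w (labs w M ! i)"
    using labs_update_prefix[of _ p M] p maxchain_length_n[OF M] by simp
  moreover have "p - 1 < length (labs w ?M')"
    using labs_length_n[OF M'(1)] p by simp
  ultimately have "lexless w (labs w ?M') (labs w M)"
    using lexless_eq_length_iff[of "labs w ?M'" "labs w M" w]
      labs_length_n[OF M] labs_length_n[OF M'(1)] by auto
  with M'(1) that show ?thesis
    by (simp add: lexless_iff_less)
qed

text \<open>In an interval on which M only ascends, its first label is the smallest atom that can
  enter the interval, hence no larger than the first label of any other maximal chain through it.\<close>

lemma first_label_le_of_ascents: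
  assumes M: "maxchain (M::'a list)" and N: "maxchain N" and "q < b" "b \<le> n"
    and "M ! q = N ! q" and "M ! b = N ! b"
    and asc: "\<forall>i. q < i \<and> i < b \<longrightarrow> ascent w (labs w M) i"
  shows "w (labs w M ! q) \<le> w (labs w N ! q)"
proof -
  let ?a = "labs w N ! q"
  have "?a \<le> M ! b"
    using labs_le[OF N, of q] maxchain_le[OF N, of "Suc q" b] assms(3-6) by (simp add: order_trans)
  moreover have "\<not> ?a \<le> M ! q"
    using labs_not_le[OF N, of q] assms(3-5) by simp
  ultimately obtain r where r: "q \<le> r" "r < b" "\<not> ?a \<le> M ! r" "?a \<le> M ! Suc r"
    using exists_crossing_step[of "\<lambda>i. ?a \<le> M ! i" q b] \<open>q < b\<close> by auto
  then have "w (labs w M ! r) \<le> w ?a"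
    using labs_minimal[OF M, of r] labs_atom[OF N, of q] assms(3,4) by simp
  moreover have "w (labs w M ! q) \<le> w (labs w M ! r)"
    using ascents_imp_weight_mono[of q r w "labs w M"] asc r by simp
  ultimately show ?thesis
    by simp
qed

lemma ascents_imp_lex_le:
  assumes M: "maxchain (M::'a list)" and N: "maxchain N" and agree: "\<forall>t\<in>T. M ! t = N ! t"
    and asc: "\<forall>i. 0 < i \<and> i < n \<and> i \<notin> T \<longrightarrow> ascent w (labs w M) i"
  shows "map w (labs w M) \<le> map w (labs w N)"
proof (rule ccontr)
  assume "\<not> ?thesis"
  then have "lexless w (labs w N) (labs w M)"
    by (simp add: lexless_iff_less)
  then obtain q where q: "q < n" "\<forall>i<q. w (labs w N ! i) = w (labs w M ! i)"
    and less: "w (labs w N ! q) < w (labs w M ! q)"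
    using lexless_eq_length_iff[of "labs w N" "labs w M" w] labs_length_n[OF M] labs_length_n[OF N]
    by auto
  have "\<forall>i<q. labs w M ! i = labs w N ! i"
    using q atom_eqI labs_atom[OF M] labs_atom[OF N] by simp
  then have "M ! q = N ! q"
    using maxchain_eq_upto_labs[OF M N] q(1) maxchain_length_n[OF M] maxchain_length_n[OF N] by simp
  define b where "b = (LEAST r. q < r \<and> (r \<in> T \<or> r = n))"
  have b: "q < b \<and> (b \<in> T \<or> b = n)" and "b \<le> n"
    using LeastI[of "\<lambda>r. q < r \<and> (r \<in> T \<or> r = n)" n] Least_le[of "\<lambda>r. q < r \<and> (r \<in> T \<or> r = n)" n] q(1)
    by (simp_all add: b_def)
  have "M ! b = N ! b"
    using b agree maxchain_top[OF M] maxchain_top[OF N] by auto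
  moreover have "ascent w (labs w M) i" if "q < i" "i < b" for i
    using not_less_Least[of i "\<lambda>r. q < r \<and> (r \<in> T \<or> r = n)"] that asc \<open>b \<le> n\<close> by (simp add: b_def)
  ultimately have "w (labs w M ! q) \<le> w (labs w N ! q)"
    using first_label_le_of_ascents[OF M N _ \<open>b \<le> n\<close> \<open>M ! q = N ! q\<close>] b by blast
  with less show False
    by simp
qed

lemma ffirst_ascent:
  assumes "\<gamma> \<in> maxchainsS S" and "0 < m" "m < n" "m \<notin> S"
  shows "ascent w (labs w (ffirst w \<gamma>)) m"
proof (rule ccontr)
  let ?M = "ffirst w \<gamma>"
  assume "\<not> ?thesis"
  then obtain x where M': "maxchain (?M[m := x])" and less: "map w (labs w (?M[m := x])) < map w (labs w ?M)"
    using descent_swap maxchainsS_ffirst(1)[OF assms(1)] assms(2,3) by blast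
  have "\<gamma> = (!) (?M[m := x]) ` S"
    unfolding nth_update_image[OF assms(4)] by (rule maxchainsS_ffirst(2)[OF assms(1)])
  then have "\<gamma> \<subseteq> set (?M[m := x])"
    using maxchain_inter_PS[OF M'] by auto
  with maxchainsS_ffirst(3)[OF assms(1) M'] less show False
    by simp
qed

end

section \<open>Homology facets\<close>

lemma homology_facet_iff_boundary_covered:
  assumes "\<forall>i<j. \<not> Fs ! j \<subseteq> Fs ! i"
  shows "homology_facet Fs j \<longleftrightarrow> (\<forall>x\<in>Fs ! j. \<exists>i<j. Fs ! j - {x} \<subseteq> Fs ! i)"
proof
  assume hom: "homology_facet Fs j"
  show "\<forall>x\<in>Fs ! j. \<exists>i<j. Fs ! j - {x} \<subseteq> Fs ! i"
  proof
    fix x assume "x \<in> Fs ! j"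
    then have "Fs ! j - {x} \<in> past Fs j"
      using hom by (auto simp: homology_facet_def)
    then show "\<exists>i<j. Fs ! j - {x} \<subseteq> Fs ! i"
      by (auto simp: past_def)
  qed
next
  assume cover: "\<forall>x\<in>Fs ! j. \<exists>i<j. Fs ! j - {x} \<subseteq> Fs ! i"
  show "homology_facet Fs j"
    unfolding homology_facet_def past_def
  proof (intro equalityI subsetI)
    fix G assume "G \<in> Pow (Fs ! j) \<inter> (\<Union>i<j. Pow (Fs ! i))"
    then obtain i where "i < j" "G \<subseteq> Fs ! j" "G \<subseteq> Fs ! i"
      by auto
    with assms show "G \<in> {G. G \<subset> Fs ! j}"
      by auto
  next
    fix G assume "G \<in> {G. G \<subset> Fs ! j}"
    then obtain x where "x \<in> Fs ! j" "x \<notin> G" "G \<subseteq> Fs ! j"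
      by auto
    moreover from cover this(1) obtain i where "i < j" "Fs ! j - {x} \<subseteq> Fs ! i"
      by blast
    ultimately show "G \<in> Pow (Fs ! j) \<inter> (\<Union>i<j. Pow (Fs ! i))"
      by auto
  qed
qed

locale lex_ordered_facets = selected_geometric_lattice w n S
  for w :: "'a::{finite,complete_lattice} \<Rightarrow> nat" and n S +
  fixes Fs :: "'a set list"
  assumes facets_distinct: "distinct Fs"
    and facets: "set Fs = maxchainsS S"
    and lex_order: "\<forall>i j. i < j \<and> j < length Fs \<longrightarrow>
      \<not> lexless w (labs w (ffirst w (Fs ! j))) (labs w (ffirst w (Fs ! i)))"
begin

lemma facet_in_maxchainsS: "i < length Fs \<Longrightarrow> Fs ! i \<in> maxchainsS S"
  using facets nth_mem by blast

lemma ffirst_facets_sorted: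
  "i \<le> j \<Longrightarrow> j < length Fs \<Longrightarrow> map w (labs w (ffirst w (Fs ! i))) \<le> map w (labs w (ffirst w (Fs ! j)))"
  using lex_order by (cases "i = j") (auto simp: lexless_iff_less not_less)

lemma facet_not_subset_earlier:
  assumes "i < j" and "j < length Fs"
  shows "\<not> Fs ! j \<subseteq> Fs ! i"
proof
  assume "Fs ! j \<subseteq> Fs ! i"
  moreover have "Fs ! i \<in> maxchainsS S" "Fs ! j \<in> maxchainsS S"
    using assms facet_in_maxchainsS by simp_all
  ultimately have "Fs ! i = Fs ! j"
    unfolding maxchainsS_def by blast
  with assms facets_distinct show False
    by (simp add: nth_eq_iff_index_eq)
qed

lemma image_ffirst_facet: "i < length Fs \<Longrightarrow> (!) (ffirst w (Fs ! i)) ` S = Fs ! i"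
  using maxchainsS_ffirst(2)[OF facet_in_maxchainsS] by (rule sym)

lemma ascent_face_not_in_earlier_facet:
  assumes j: "j < length Fs" and "i < j" and "p \<in> S" and asc: "ascent w (labs w (ffirst w (Fs ! j))) p"
  shows "\<not> Fs ! j - {ffirst w (Fs ! j) ! p} \<subseteq> Fs ! i"
proof
  let ?M = "ffirst w (Fs ! j)" and ?N = "ffirst w (Fs ! i)"
  assume face: "Fs ! j - {?M ! p} \<subseteq> Fs ! i"
  have M: "maxchain ?M" and N: "maxchain ?N"
    using maxchainsS_ffirst(1)[OF facet_in_maxchainsS] j \<open>i < j\<close> by simp_all
  have "?M ! t = ?N ! t" if "t \<in> S - {p}" for t
  proof -
    have "t \<le> n" "p \<le> n"
      using that \<open>p \<in> S\<close> selection by auto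
    then have "?M ! t \<noteq> ?M ! p"
      using maxchain_nth_inj[OF M, of t p] that by blast
    moreover have "?M ! t \<in> Fs ! j"
      using imageI[of t S "(!) ?M"] image_ffirst_facet[OF j] that by simp
    ultimately have "?M ! t \<in> (!) ?N ` S"
      using face image_ffirst_facet[of i] j \<open>i < j\<close> by auto
    then show ?thesis
      using maxchain_nth_eq_if_in_image[OF M N] that by blast
  qed
  moreover have "ascent w (labs w ?M) m" if "0 < m" "m < n" "m \<notin> S - {p}" for m
    using asc ffirst_ascent[OF facet_in_maxchainsS[OF j]] that by (cases "m = p") auto
  ultimately have "map w (labs w ?M) \<le> map w (labs w ?N)"
    using ascents_imp_lex_le[OF M N, of "S - {p}"] by blast
  moreover have "map w (labs w ?N) \<le> map w (labs w ?M)"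
    using ffirst_facets_sorted \<open>i < j\<close> j by simp
  ultimately have "?M = ?N"
    using maxchain_labs_inj[OF M N] by simp
  have "Fs ! i = (!) ?N ` S"
    using image_ffirst_facet[of i] \<open>i < j\<close> j by simp
  also have "\<dots> = Fs ! j"
    using image_ffirst_facet[OF j] \<open>?M = ?N\<close> by simp
  finally have "Fs ! i = Fs ! j" .
  with \<open>i < j\<close> j facets_distinct show False
    by (simp add: nth_eq_iff_index_eq)
qed

lemma descent_face_in_earlier_facet:
  assumes j: "j < length Fs" and p: "p \<in> S" and desc: "\<not> ascent w (labs w (ffirst w (Fs ! j))) p"
  shows "\<exists>i<j. Fs ! j - {ffirst w (Fs ! j) ! p} \<subseteq> Fs ! i"
proof -
  let ?M = "ffirst w (Fs ! j)"
  have M: "maxchain ?M"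
    using maxchainsS_ffirst(1)[OF facet_in_maxchainsS[OF j]] .
  have "0 < p" "p < n"
    using p selection by auto
  then obtain x where M': "maxchain (?M[p := x])"
    and less: "map w (labs w (?M[p := x])) < map w (labs w ?M)"
    using descent_swap[OF M] desc by blast
  have "set (?M[p := x]) \<inter> PS S \<in> set Fs"
    using maxchain_inter_PS_in_maxchainsS[OF M'] facets by simp
  then obtain i where "i < length Fs" "Fs ! i = set (?M[p := x]) \<inter> PS S"
    by (auto simp: in_set_conv_nth)
  then have i: "i < length Fs" "Fs ! i = (!) (?M[p := x]) ` S"
    using maxchain_inter_PS[OF M'] by simp_all
  have "Fs ! j - {?M ! p} \<subseteq> Fs ! i"
  proof
    fix y assume y: "y \<in> Fs ! j - {?M ! p}"
    then have "y \<in> (!) ?M ` S"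
      using image_ffirst_facet[OF j] by simp
    with y obtain t where "t \<in> S" "t \<noteq> p" "y = ?M ! t"
      by blast
    then have "y = ?M[p := x] ! t"
      by simp
    with \<open>t \<in> S\<close> show "y \<in> Fs ! i"
      using i(2) by blast
  qed
  moreover have "i < j"
  proof (rule ccontr)
    assume "\<not> i < j"
    then have "j \<le> i"
      by simp
    have "Fs ! i \<subseteq> set (?M[p := x])"
      using i(2) maxchain_inter_PS[OF M'] by auto
    then have "map w (labs w (ffirst w (Fs ! i))) < map w (labs w ?M)"
      using maxchainsS_ffirst(3)[OF facet_in_maxchainsS[OF i(1)] M'] less by simp
    with ffirst_facets_sorted[OF \<open>j \<le> i\<close> i(1)] show False
      by simp
  qed
  ultimately show ?thesis
    by blast
qed

lemma homology_facet_iff_descents: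
  assumes j: "j < length Fs"
  shows "homology_facet Fs j \<longleftrightarrow> (\<forall>p\<in>S. \<not> ascent w (labs w (ffirst w (Fs ! j))) p)"
proof -
  let ?M = "ffirst w (Fs ! j)"
  have "homology_facet Fs j \<longleftrightarrow> (\<forall>x\<in>Fs ! j. \<exists>i<j. Fs ! j - {x} \<subseteq> Fs ! i)"
    using homology_facet_iff_boundary_covered facet_not_subset_earlier[OF _ j] by blast
  also have "\<dots> \<longleftrightarrow> (\<forall>x\<in>(!) ?M ` S. \<exists>i<j. Fs ! j - {x} \<subseteq> Fs ! i)"
    by (simp only: image_ffirst_facet[OF j])
  also have "\<dots> \<longleftrightarrow> (\<forall>p\<in>S. \<exists>i<j. Fs ! j - {?M ! p} \<subseteq> Fs ! i)"
    by blast
  also have "\<dots> \<longleftrightarrow> (\<forall>p\<in>S. \<not> ascent w (labs w ?M) p)"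
    using ascent_face_not_in_earlier_facet descent_face_in_earlier_facet j by blast
  finally show ?thesis .
qed

end

section \<open>Ribbon fillings\<close>

lemma concat_take_blocks:
  "sum_list rs = length xs \<Longrightarrow>
   concat (map (\<lambda>i. map (\<lambda>t. xs ! (sum_list (take i rs) + t)) [0..<rs ! i]) [0..<length rs]) = xs"
proof (induction rs arbitrary: xs)
  case (Cons r rs)
  have "map (\<lambda>t. xs ! t) [0..<r] = take r xs"
    using Cons.prems by (intro nth_equalityI) auto
  moreover have "concat (map (\<lambda>i. map (\<lambda>t. xs ! (r + sum_list (take i rs) + t)) [0..<rs ! i]) [0..<length rs])
      = drop r xs"
    using Cons.IH[of "drop r xs"] Cons.prems by (simp add: add.assoc)
  moreover have "[0..<length (r # rs)] = 0 # map Suc [0..<length rs]"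
    by (simp add: map_Suc_upt upt_conv_Cons del: upt_Suc)
  ultimately show ?case
    by (simp add: comp_def)
qed simp

lemma reading_word_frib: "sum_list rs = length (labs w M) \<Longrightarrow> reading_word rs (frib w rs M) = labs w M"
  unfolding reading_word_def frib_def rib_start_def using concat_take_blocks[of rs "labs w M"] by simp

context rank_selection
begin

text \<open>For S = {s_1 < ... < s_k}, bounds ! i is s_i with s_0 = 0 and s_(k+1) = n. Row i of the
  ribbon has length s_(i+1) - s_i, starts in column s_i - i, and holds the letters s_i ..< s_(i+1) of
  the reading word.\<close>

definition bounds :: "nat list" where
  "bounds = 0 # sorted_list_of_set S @ [n]"

lemma finite_S: "finite S"
  using selection finite_subset by blast

lemma length_bounds: "length bounds = Suc (Suc (card S))"
  by (simp add: bounds_def finite_S)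

lemma bounds_0: "bounds ! 0 = 0"
  by (simp add: bounds_def)

lemma bounds_last: "bounds ! Suc (card S) = n"
  by (simp add: bounds_def nth_append finite_S)

lemma in_S_iff_bound: "m \<in> S \<longleftrightarrow> (\<exists>i. 0 < i \<and> i \<le> card S \<and> bounds ! i = m)"
proof -
  have "m \<in> S \<longleftrightarrow> (\<exists>i<card S. sorted_list_of_set S ! i = m)"
    using finite_S by (metis in_set_conv_nth length_sorted_list_of_set set_sorted_list_of_set)
  also have "\<dots> \<longleftrightarrow> (\<exists>i. 0 < i \<and> i \<le> card S \<and> bounds ! i = m)"
    by (auto simp: bounds_def nth_append finite_S gr0_conv_Suc Suc_le_eq)
  finally show ?thesis .
qed

lemma strict_sorted_bounds: "0 < n \<Longrightarrow> sorted_wrt (<) bounds"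
  using selection strict_sorted_list_of_set[of S] finite_S
  by (auto simp: bounds_def sorted_wrt_append)

lemma sorted_bounds: "sorted bounds"
proof (cases "n = 0")
  case True
  with selection have "S = {}"
    by auto
  with True show ?thesis
    unfolding bounds_def by simp
next
  case False
  then have "sorted_wrt (<) bounds"
    using strict_sorted_bounds by simp
  then show ?thesis
    by (simp add: strict_sorted_iff)
qed

lemma le_bounds: "0 < n \<Longrightarrow> i < length bounds \<Longrightarrow> i \<le> bounds ! i"
proof (induction i)
  case (Suc i)
  then show ?case
    using sorted_wrt_nth_less[OF strict_sorted_bounds[OF Suc.prems(1)], of i "Suc i"] by simp
qed simp

lemma bounds_step:
  assumes "0 < n" and "i \<le> card S"
  shows "i \<le> bounds ! i" and "bounds ! i < bounds ! Suc i" and "bounds ! Suc i \<le> n"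
  using le_bounds[OF assms(1), of i] sorted_wrt_nth_less[OF strict_sorted_bounds[OF assms(1)], of i "Suc i"]
    sorted_nth_mono[OF sorted_bounds, of "Suc i" "Suc (card S)"] bounds_last assms(2) length_bounds
  by simp_all

lemma length_ribrows: "length (ribrows n S) = Suc (card S)"
  by (simp add: ribrows_def Let_def finite_S)

lemma ribrows_nth:
  assumes "i \<le> card S"
  shows "ribrows n S ! i = bounds ! Suc i - bounds ! i"
proof -
  let ?s = "sorted_list_of_set S"
  have "i < length (0 # ?s)"
    using assms finite_S by simp
  then have "ribrows n S ! i = (?s @ [n]) ! i - (0 # ?s) ! i"
    unfolding ribrows_def Let_def by simp
  moreover have "bounds ! i = (0 # ?s) ! i"
    using nth_append_left[OF \<open>i < length (0 # ?s)\<close>, of "[n]"] by (simp add: bounds_def)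
  moreover have "bounds ! Suc i = (?s @ [n]) ! i"
    by (simp add: bounds_def)
  ultimately show ?thesis
    by simp
qed

lemma sum_take_ribrows: "i \<le> Suc (card S) \<Longrightarrow> sum_list (take i (ribrows n S)) = bounds ! i"
proof (induction i)
  case (Suc i)
  have "bounds ! i \<le> bounds ! Suc i"
    using sorted_nth_mono[OF sorted_bounds, of i "Suc i"] Suc.prems length_bounds by simp
  moreover have "take (Suc i) (ribrows n S) = take i (ribrows n S) @ [bounds ! Suc i - bounds ! i]"
    using Suc.prems length_ribrows ribrows_nth[of i] by (simp add: take_Suc_conv_app_nth)
  ultimately show ?case
    using Suc.IH Suc.prems by simp
qed (simp add: bounds_0)

lemma sum_ribrows: "sum_list (ribrows n S) = n"
  using sum_take_ribrows[of "Suc (card S)"] length_ribrows bounds_last by simp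

lemma rib_start_ribrows: "0 < n \<Longrightarrow> i \<le> Suc (card S) \<Longrightarrow> rib_start (ribrows n S) i = bounds ! i - i"
proof (induction i)
  case (Suc i)
  have "bounds ! i < bounds ! Suc i" "i \<le> bounds ! i"
    using sorted_wrt_nth_less[OF strict_sorted_bounds[OF Suc.prems(1)], of i "Suc i"]
      le_bounds[OF Suc.prems(1), of i] Suc.prems length_bounds
    by simp_all
  moreover have "rib_start (ribrows n S) (Suc i) = rib_start (ribrows n S) i + (ribrows n S ! i - 1)"
    by (simp add: rib_start_def)
  ultimately show ?case
    using Suc.IH Suc.prems ribrows_nth[of i] by simp
qed (simp add: rib_start_def bounds_0)

lemma rib_boxes_ribrows:
  assumes "0 < n"
  shows "(i, c) \<in> rib_boxes (ribrows n S) \<longleftrightarrow> i \<le> card S \<and> bounds ! i - i \<le> c \<and> c < bounds ! Suc i - i"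
proof -
  have "(i, c) \<in> rib_boxes (ribrows n S) \<longleftrightarrow>
      i \<le> card S \<and> (\<exists>t. t < bounds ! Suc i - bounds ! i \<and> c = bounds ! i - i + t)"
    unfolding rib_boxes_def using rib_start_ribrows[OF assms, of i] ribrows_nth[of i] length_ribrows
    by (auto simp: less_Suc_eq_le)
  moreover have "i \<le> bounds ! i" if "i \<le> card S"
    using le_bounds[OF assms, of i] that length_bounds by simp
  ultimately show ?thesis
    by (auto intro: exI[of _ "c - (bounds ! i - i)"])
qed

lemma frib_ribrows:
  assumes "0 < n" and "i \<le> card S" and "bounds ! i - i \<le> c"
  shows "frib w (ribrows n S) M (i, c) = labs w M ! (c + i)"
proof -
  have "i \<le> bounds ! i"
    using le_bounds[OF assms(1), of i] assms(2) length_bounds by simp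
  with assms show ?thesis
    using rib_start_ribrows[OF assms(1), of i] sum_take_ribrows[of i] by (simp add: frib_def)
qed

lemma between_bounds_notin_S:
  assumes "bounds ! i < m" and "m < bounds ! Suc i" and "Suc i < length bounds"
  shows "m \<notin> S"
proof
  assume "m \<in> S"
  then obtain j where "0 < j" "j \<le> card S" "bounds ! j = m"
    using in_S_iff_bound by blast
  then have j: "j < length bounds" "bounds ! j = m"
    using length_bounds by simp_all
  show False
  proof (cases "j \<le> i")
    case True
    then show False
      using sorted_nth_mono[OF sorted_bounds True] assms j by simp
  next
    case False
    then show False
      using sorted_nth_mono[OF sorted_bounds, of "Suc i" j] assms j by simp
  qed
qed

lemma row_of_position: "m < n \<Longrightarrow> \<exists>i\<le>card S. bounds ! i \<le> m \<and> m < bounds ! Suc i"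
  using exists_crossing_step[of "\<lambda>i. m < bounds ! i" 0 "Suc (card S)"] bounds_0 bounds_last
  by (auto simp: not_less less_Suc_eq_le)

lemma row_pair_iff:
  assumes "0 < n"
  shows "(i, c) \<in> rib_boxes (ribrows n S) \<and> (i, Suc c) \<in> rib_boxes (ribrows n S) \<longleftrightarrow>
    i \<le> card S \<and> bounds ! i < Suc (c + i) \<and> Suc (c + i) < bounds ! Suc i"
  using rib_boxes_ribrows[OF assms, of i c] rib_boxes_ribrows[OF assms, of i "Suc c"]
    bounds_step[OF assms, of i] by auto

lemma frib_row_pair:
  assumes "0 < n" and "i \<le> card S" and "bounds ! i < Suc (c + i)"
  shows "frib w (ribrows n S) M (i, c) = labs w M ! (c + i)"
    and "frib w (ribrows n S) M (i, Suc c) = labs w M ! Suc (c + i)"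
proof -
  have c: "bounds ! i - i \<le> c" "bounds ! i - i \<le> Suc c"
    using assms(3) by linarith+
  show "frib w (ribrows n S) M (i, c) = labs w M ! (c + i)"
    by (rule frib_ribrows[OF assms(1,2) c(1)])
  show "frib w (ribrows n S) M (i, Suc c) = labs w M ! Suc (c + i)"
    using frib_ribrows[OF assms(1,2) c(2)] by simp
qed

lemma column_pair_iff:
  assumes "0 < n"
  shows "(i, c) \<in> rib_boxes (ribrows n S) \<and> (Suc i, c) \<in> rib_boxes (ribrows n S) \<longleftrightarrow>
    Suc i \<le> card S \<and> c = bounds ! Suc i - Suc i"
  using rib_boxes_ribrows[OF assms] bounds_step[OF assms, of i] bounds_step[OF assms, of "Suc i"]
  by auto

lemma frib_column_pair:
  assumes "0 < n" and i: "Suc i \<le> card S"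
  shows "frib w (ribrows n S) M (Suc i, bounds ! Suc i - Suc i) = labs w M ! (bounds ! Suc i)"
    and "frib w (ribrows n S) M (i, bounds ! Suc i - Suc i) = labs w M ! (bounds ! Suc i - 1)"
proof -
  let ?c = "bounds ! Suc i - Suc i"
  have "Suc i \<le> bounds ! Suc i" "i \<le> bounds ! i" "bounds ! i < bounds ! Suc i"
    using bounds_step[OF assms(1), of i] bounds_step[OF assms(1), of "Suc i"] i by simp_all
  then have "?c + Suc i = bounds ! Suc i" "?c + i = bounds ! Suc i - 1" "bounds ! i - i \<le> ?c"
    by linarith+
  then show "frib w (ribrows n S) M (Suc i, ?c) = labs w M ! (bounds ! Suc i)"
    "frib w (ribrows n S) M (i, ?c) = labs w M ! (bounds ! Suc i - 1)"
    using frib_ribrows[OF assms(1) i, of ?c] frib_ribrows[OF assms(1), of i ?c] i by simp_all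
qed

lemma rows_increasing_iff:
  assumes "0 < n"
  shows "(\<forall>i c. (i, c) \<in> rib_boxes (ribrows n S) \<and> (i, Suc c) \<in> rib_boxes (ribrows n S) \<longrightarrow>
      w (frib w (ribrows n S) M (i, c)) < w (frib w (ribrows n S) M (i, Suc c))) \<longleftrightarrow>
    (\<forall>m. 0 < m \<and> m < n \<and> m \<notin> S \<longrightarrow> ascent w (labs w M) m)"
    (is "?rows \<longleftrightarrow> ?asc")
proof
  assume ?rows
  show ?asc
  proof (intro allI impI)
    fix m assume m: "0 < m \<and> m < n \<and> m \<notin> S"
    then obtain i where i: "i \<le> card S" "bounds ! i \<le> m" "m < bounds ! Suc i"
      using row_of_position by blast
    have "bounds ! i \<noteq> m"
      using m in_S_iff_bound[of m] i(1) bounds_0 by (cases i) auto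
    let ?c = "m - Suc i"
    have c: "bounds ! i < Suc (?c + i)" "Suc (?c + i) < bounds ! Suc i" "?c + i = m - 1" "Suc (m - 1) = m"
      using \<open>bounds ! i \<noteq> m\<close> i bounds_step[OF assms i(1)] m by linarith+
    with \<open>?rows\<close> i(1) have "w (frib w (ribrows n S) M (i, ?c)) < w (frib w (ribrows n S) M (i, Suc ?c))"
      using row_pair_iff[OF assms] by blast
    then show "ascent w (labs w M) m"
      unfolding frib_row_pair[OF assms i(1) c(1)] c(3,4) ascent_def .
  qed
next
  assume ?asc
  show ?rows
  proof (intro allI impI)
    fix i c assume "(i, c) \<in> rib_boxes (ribrows n S) \<and> (i, Suc c) \<in> rib_boxes (ribrows n S)"
    then have pair: "i \<le> card S" "bounds ! i < Suc (c + i)" "Suc (c + i) < bounds ! Suc i"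
      using row_pair_iff[OF assms] by simp_all
    then have "Suc (c + i) \<notin> S" "Suc (c + i) < n"
      using between_bounds_notin_S[of i] bounds_step[OF assms pair(1)] length_bounds by simp_all
    with \<open>?asc\<close> have "ascent w (labs w M) (Suc (c + i))"
      by blast
    then show "w (frib w (ribrows n S) M (i, c)) < w (frib w (ribrows n S) M (i, Suc c))"
      unfolding frib_row_pair[OF assms pair(1,2)] ascent_def by simp
  qed
qed

lemma columns_decreasing_iff:
  assumes "0 < n" and distinct: "\<forall>m. 0 < m \<and> m < n \<longrightarrow> w (labs w M ! (m - 1)) \<noteq> w (labs w M ! m)"
  shows "(\<forall>i c. (i, c) \<in> rib_boxes (ribrows n S) \<and> (Suc i, c) \<in> rib_boxes (ribrows n S) \<longrightarrow>
      w (frib w (ribrows n S) M (Suc i, c)) < w (frib w (ribrows n S) M (i, c))) \<longleftrightarrow>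
    (\<forall>m\<in>S. \<not> ascent w (labs w M) m)"
    (is "?cols \<longleftrightarrow> ?desc")
proof
  assume ?cols
  show ?desc
  proof
    fix m assume "m \<in> S"
    then obtain j where j: "0 < j" "j \<le> card S" "bounds ! j = m"
      using in_S_iff_bound by blast
    then obtain i where i: "Suc i \<le> card S" "bounds ! Suc i = m"
      using gr0_conv_Suc by auto
    with \<open>?cols\<close> have "w (frib w (ribrows n S) M (Suc i, bounds ! Suc i - Suc i))
        < w (frib w (ribrows n S) M (i, bounds ! Suc i - Suc i))"
      using column_pair_iff[OF assms(1), of i] by blast
    then have "w (labs w M ! (bounds ! Suc i)) < w (labs w M ! (bounds ! Suc i - 1))"
      unfolding frib_column_pair[OF assms(1) i(1)] .
    then have "w (labs w M ! m) < w (labs w M ! (m - 1))"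
      unfolding i(2) .
    then show "\<not> ascent w (labs w M) m"
      by (simp add: ascent_def)
  qed
next
  assume ?desc
  show ?cols
  proof (intro allI impI)
    fix i c assume "(i, c) \<in> rib_boxes (ribrows n S) \<and> (Suc i, c) \<in> rib_boxes (ribrows n S)"
    then have i: "Suc i \<le> card S" and c: "c = bounds ! Suc i - Suc i"
      using column_pair_iff[OF assms(1)] by simp_all
    let ?m = "bounds ! Suc i"
    have "?m \<in> S"
      using in_S_iff_bound i by blast
    then have "0 < ?m" "?m < n" "\<not> ascent w (labs w M) ?m"
      using selection \<open>?desc\<close> by auto
    with distinct have "w (labs w M ! ?m) < w (labs w M ! (?m - 1))"
      by (auto simp: ascent_def)
    then show "w (frib w (ribrows n S) M (Suc i, c)) < w (frib w (ribrows n S) M (i, c))"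
      unfolding c frib_column_pair[OF assms(1) i] by simp
  qed
qed

lemma standard_frib_iff:
  assumes "\<forall>m. 0 < m \<and> m < n \<longrightarrow> w (labs w M ! (m - 1)) \<noteq> w (labs w M ! m)"
  shows "standard w (ribrows n S) (frib w (ribrows n S) M) \<longleftrightarrow>
    (\<forall>m. 0 < m \<and> m < n \<longrightarrow> (ascent w (labs w M) m \<longleftrightarrow> m \<notin> S))"
proof (cases "n = 0")
  case True
  with selection have "rib_boxes (ribrows n S) = {}"
    by (simp add: ribrows_def rib_boxes_def)
  with True show ?thesis
    by (simp add: standard_def)
next
  case False
  then have n: "0 < n"
    by simp
  have "(\<forall>m. 0 < m \<and> m < n \<longrightarrow> (ascent w (labs w M) m \<longleftrightarrow> m \<notin> S)) \<longleftrightarrow>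
      (\<forall>m. 0 < m \<and> m < n \<and> m \<notin> S \<longrightarrow> ascent w (labs w M) m) \<and> (\<forall>m\<in>S. \<not> ascent w (labs w M) m)"
    using selection by auto
  then show ?thesis
    unfolding standard_def rows_increasing_iff[OF n] columns_decreasing_iff[OF n assms] by simp
qed

end

context selected_geometric_lattice
begin

lemma standard_frib_ffirst_iff:
  assumes "\<gamma> \<in> maxchainsS S"
  shows "standard w (ribrows n S) (frib w (ribrows n S) (ffirst w \<gamma>)) \<longleftrightarrow>
    (\<forall>p\<in>S. \<not> ascent w (labs w (ffirst w \<gamma>)) p)"
proof -
  let ?M = "ffirst w \<gamma>"
  have "\<forall>m. 0 < m \<and> m < n \<longrightarrow> w (labs w ?M ! (m - 1)) \<noteq> w (labs w ?M ! m)"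
    using labs_consecutive_weights_neq[OF maxchainsS_ffirst(1)[OF assms]] by blast
  then have "standard w (ribrows n S) (frib w (ribrows n S) ?M) \<longleftrightarrow>
      (\<forall>m. 0 < m \<and> m < n \<longrightarrow> (ascent w (labs w ?M) m \<longleftrightarrow> m \<notin> S))"
    by (rule standard_frib_iff)
  also have "\<dots> \<longleftrightarrow> (\<forall>p\<in>S. \<not> ascent w (labs w ?M) p)"
    using ffirst_ascent[OF assms] selection by auto
  finally show ?thesis .
qed

section \<open>NBC+ bases\<close>

lemma Sup_take_labs: "maxchain (M::'a list) \<Longrightarrow> j \<le> n \<Longrightarrow> Sup (set (take j (labs w M))) = M ! j"
proof (induction j)
  case 0
  then show ?case
    using maxchain_bot by simp
next
  case (Suc j)
  have "take (Suc j) (labs w M) = take j (labs w M) @ [labs w M ! j]"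
    using Suc.prems labs_length_n by (simp add: take_Suc_conv_app_nth)
  then have "Sup (set (take (Suc j) (labs w M))) = sup (M ! j) (labs w M ! j)"
    using Suc by (simp add: sup_commute)
  also have "\<dots> = M ! Suc j"
    using maxchain_nth_Suc[OF Suc.prems(1)] maxchain_length_n[OF Suc.prems(1)] Suc.prems(2) by simp
  finally show ?case .
qed

lemma nbc_indep_labs:
  assumes M: "maxchain (M::'a list)"
  shows "nbc_indep w (set (labs w M))"
  unfolding nbc_indep_def
proof (intro conjI ballI)
  have top: "Sup (set (labs w M)) = top"
    using Sup_take_labs[OF M, of n] maxchain_top[OF M] labs_length_n[OF M] by simp
  show "set (labs w M) \<subseteq> atoms"
    using labs_atoms[OF M] .
  show "rnk (Sup (set (labs w M))) = card (set (labs w M))"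
    using top rank_top distinct_card[OF labs_distinct[OF M]] labs_length_n[OF M] by simp
  fix a assume "a \<in> atoms_below (Sup (set (labs w M))) - set (labs w M)"
  then have a: "a \<in> atoms" "a \<le> M ! n" "a \<notin> set (labs w M)"
    using top maxchain_top[OF M] by (auto simp: atoms_below_def)
  moreover have "\<not> a \<le> M ! 0"
    using atom_not_le_bot[OF a(1)] maxchain_bot[OF M] by simp
  ultimately obtain r where r: "r < n" "\<not> a \<le> M ! r" "a \<le> M ! Suc r"
    using exists_crossing_step[of "\<lambda>i. a \<le> M ! i" 0 n] by auto
  then have "labs w M ! r \<in> set (labs w M)"
    using labs_length_n[OF M] by simp
  moreover have "w (labs w M ! r) < w a"
  proof -
    have "w (labs w M ! r) \<le> w a"
      using labs_minimal[OF M r(1) a(1) r(3) r(2)] .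
    moreover have "labs w M ! r \<noteq> a"
      using a(3) \<open>labs w M ! r \<in> set (labs w M)\<close> by auto
    then have "w (labs w M ! r) \<noteq> w a"
      using atom_eqI labs_atom[OF M r(1)] a(1) by blast
    ultimately show ?thesis
      by simp
  qed
  ultimately show "\<exists>b\<in>set (labs w M). w b < w a"
    by blast
qed

lemma nbc_plus_labs:
  assumes M: "maxchain (M::'a list)"
  shows "nbc_plus w n (labs w M)"
  unfolding nbc_plus_def
proof (intro conjI allI impI)
  show "length (labs w M) = n" "distinct (labs w M)" "nbc_indep w (set (labs w M))"
    using labs_length_n[OF M] labs_distinct[OF M] nbc_indep_labs[OF M] .
  fix j assume "j < n"
  then show "labs w M ! j = amin w (atoms_below (Sup (set (take (Suc j) (labs w M)))) -
      atoms_below (Sup (set (take j (labs w M)))))"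
    using Sup_take_labs[OF M, of j] Sup_take_labs[OF M, of "Suc j"] labs_nth_n[OF M] by (simp add: lab_def)
qed

lemma nbc_plus_reading_word_frib:
  assumes "maxchain (M::'a list)"
  shows "nbc_plus w n (reading_word (ribrows n S) (frib w (ribrows n S) M))"
proof -
  have "reading_word (ribrows n S) (frib w (ribrows n S) M) = labs w M"
    by (intro reading_word_frib) (simp add: sum_ribrows labs_length_n[OF assms])
  with nbc_plus_labs[OF assms] show ?thesis
    by simp
qed

end

theorem proposition5p20:
  fixes w :: "'a::{finite,complete_lattice} \<Rightarrow> nat"
    and n :: nat and S :: "nat set" and Fs :: "'a set list"
  assumes geom: "geometric_lattice TYPE('a)"
    and rank: "rnk (top::'a) = n"
    and atom_order: "inj_on w atoms"
    and S: "S \<subseteq> {1..<n}"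
    and facets: "distinct Fs" "set Fs = maxchainsS S"
    and linext: "\<forall>i j. i < j \<and> j < length Fs \<longrightarrow>
         \<not> lexless w (labs w (ffirst w (Fs ! j))) (labs w (ffirst w (Fs ! i)))"
    and shell: "is_shelling Fs"
  shows "\<forall>j < length Fs. homology_facet Fs j \<longleftrightarrow>
           (standard w (ribrows n S) (frib w (ribrows n S) (ffirst w (Fs ! j))) \<and>
            nbc_plus w n (reading_word (ribrows n S) (frib w (ribrows n S) (ffirst w (Fs ! j)))))"
proof -
  interpret lex_ordered_facets w n S Fs
    using geom rank atom_order S facets linext by unfold_locales auto
  show ?thesis
  proof (intro allI impI)
    fix j assume j: "j < length Fs"
    then have "Fs ! j \<in> maxchainsS S"
      by (rule facet_in_maxchainsS)
    then show "homology_facet Fs j \<longleftrightarrow>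
        (standard w (ribrows n S) (frib w (ribrows n S) (ffirst w (Fs ! j))) \<and>
         nbc_plus w n (reading_word (ribrows n S) (frib w (ribrows n S) (ffirst w (Fs ! j)))))"
      using homology_facet_iff_descents[OF j] standard_frib_ffirst_iff
        nbc_plus_reading_word_frib maxchainsS_ffirst(1) by simp
  qed
qed

end
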